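(* Let $X$ be a complete metric space, let $f:X\to\mathbb{R}\cup\{+\infty\}$ be a proper lower semicontinuous function, let $r_0>0$ and let $k>0$. The following assertions are equivalent: (i) The multivalued mapping $F:X\rightrightarrows\mathbb{R}$, $F(x)=[f(x),+\infty)$, is $k$-metrically regular on $[0<f<r_0]\times(0,r_0)$; (ii) For all $r\in(0,r_0)$ and all $x\in[0<f<r_0]$, $$\operatorname{dist}(x,[f\le r])\le k\,(f(x)-r)^+;$$ (iii) For all $x\in[0<f<r_0]$, $|\nabla f|(x)\ge \frac1k$.
   Context: Notation: $[r_1<f<r_2]=\{x\in X: r_1<f(x)<r_2\}$, $[f\le r]=\{x\in X:f(x)\le r\}$; $a^+=\max\{a,0\}$; $\operatorname{dist}(x,S)=\inf_{y\in S}d(x,y)$ (equal to $+\infty$ if $S=\emptyset$). For a multivalued map $F:X\rightrightarrows Y$ between metric spaces, $\operatorname{Graph}F=\{(x,y):y\in F(x)\}$ and $F^{-1}(y)=\{x:y\in F(x)\}$. $F$ is $k$-metrically regular at $(\bar x,\bar y)\in\operatorname{Graph}F$ if there exist $\varepsilon,\delta>0$ such that $\operatorname{dist}(x,F^{-1}(y))\le k\operatorname{dist}(y,F(x))$ for all $(x,y)\in B(\bar x,\varepsilon)\times B(\bar y,\delta)$; $F$ is $k$-metrically regular on a set $V\subset X\times Y$ if it is $k$-metrically regular at every point of $\operatorname{Graph}F\cap V$. The strong slope of $f$ at $x\in\operatorname{dom}f$ is $|\nabla f|(x)=\limsup_{y\to x}\frac{(f(x)-f(y))^+}{d(x,y)}$.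 $B(x,r)$ is the open ball. *)

theory Defs
  imports "HOL-Analysis.Analysis"
begin

definition set_dist :: "'a::metric_space \<Rightarrow> 'a set \<Rightarrow> ereal" where
  "set_dist x S = (if S = {} then \<infinity> else ereal (INF y\<in>S. dist x y))"

definition graph_mv :: "('a \<Rightarrow> 'b set) \<Rightarrow> ('a \<times> 'b) set" where
  "graph_mv F = {(x, y). y \<in> F x}"

definition inv_mv :: "('a \<Rightarrow> 'b set) \<Rightarrow> 'b \<Rightarrow> 'a set" where
  "inv_mv F y = {x. y \<in> F x}"

definition metrically_regular_at ::
  "real \<Rightarrow> ('a::metric_space \<Rightarrow> 'b::metric_space set) \<Rightarrow> 'a \<Rightarrow> 'b \<Rightarrow> bool" where
  "metrically_regular_at k F xb yb \<longleftrightarrow>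
     (\<exists>\<epsilon>>0. \<exists>\<delta>>0. \<forall>x\<in>ball xb \<epsilon>. \<forall>y\<in>ball yb \<delta>.
        set_dist x (inv_mv F y) \<le> ereal k * set_dist y (F x))"

definition metrically_regular_on ::
  "real \<Rightarrow> ('a::metric_space \<Rightarrow> 'b::metric_space set) \<Rightarrow> ('a \<times> 'b) set \<Rightarrow> bool" where
  "metrically_regular_on k F V \<longleftrightarrow>
     (\<forall>(xb, yb) \<in> graph_mv F \<inter> V. metrically_regular_at k F xb yb)"

definition proper_fun :: "('a \<Rightarrow> ereal) \<Rightarrow> bool" where
  "proper_fun f \<longleftrightarrow> (\<forall>x. f x \<noteq> -\<infinity>) \<and> (\<exists>x. f x \<noteq> \<infinity>)"

definition lsc_fun :: "('a::topological_space \<Rightarrow> ereal) \<Rightarrow> bool" where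
  "lsc_fun f \<longleftrightarrow> (\<forall>x. f x \<le> Liminf (at x) f)"

definition strong_slope :: "('a::metric_space \<Rightarrow> ereal) \<Rightarrow> 'a \<Rightarrow> ereal" where
  "strong_slope f x = Limsup (at x) (\<lambda>y. max 0 (f x - f y) / ereal (dist x y))"

end

theory Submission
  imports Defs
begin

text \<open>
  (i) \<Rightarrow> (iii): metric regularity at (x, f x) provides, for every small t > 0, a point w with
  f w \<le> f x - t at distance about k t from x, so f decreases near x at rate at least 1/k.

  (iii) \<Rightarrow> (ii): if [f \<le> r] were farther than \<rho> > k (f x - r) from x, Ekeland's variational
  principle, applied to f truncated to [r, f x] with constant c = (f x - r) / \<rho> < 1/k, would give
  a point z with r < f z \<le> f x at which f decreases at rate at most c, i.e. |\<nabla>f|(z) \<le> c.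

  (ii) \<Rightarrow> (i): near a graph point (xb, yb), dist(x, F^-1(y)) is bounded by the error bound at x
  when x lies in the band, and otherwise by the error bound at xb and the triangle inequality;
  both bounds are at most k (f x - y)^+ = k dist(y, F x).
\<close>

lemma closed_sublevel_of_lsc:
  fixes g :: "'a::topological_space \<Rightarrow> 'b::linorder"
  assumes "\<And>z t. t < g z \<Longrightarrow> \<forall>\<^sub>F w in nhds z. t < g w"
  shows "closed {w. g w \<le> a}"
  unfolding closed_def
  by (metis (mono_tags) assms Collect_neg_eq not_le eventually_nhds mem_Collect_eq open_subopen subsetI)

lemma lsc_add_scaled_dist:
  fixes h :: "'a::metric_space \<Rightarrow> real"
  assumes lsc: "\<And>z t. t < h z \<Longrightarrow> \<forall>\<^sub>F w in nhds z. t < h w"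
    and less: "t < h z + c * dist z y"
  shows "\<forall>\<^sub>F w in nhds z. t < h w + c * dist w y"
proof -
  define \<eta> where "\<eta> = (h z + c * dist z y - t) / 2"
  have "\<eta> > 0" using less by (simp add: \<eta>_def)
  have "((\<lambda>w. c * dist w y) \<longlongrightarrow> c * dist z y) (nhds z)"
    by (rule tendsto_mult_left[OF tendsto_dist[OF filterlim_ident tendsto_const]])
  then have "\<forall>\<^sub>F w in nhds z. c * dist z y - \<eta> < c * dist w y"
    using \<open>\<eta> > 0\<close> by (intro order_tendstoD(1)) auto
  moreover have "\<forall>\<^sub>F w in nhds z. h z - \<eta> < h w"
    using lsc \<open>\<eta> > 0\<close> by simp
  ultimately show ?thesis
    by eventually_elim (simp add: \<eta>_def; argo)
qed

definition ekeland_set :: "('a::metric_space \<Rightarrow> real) \<Rightarrow> real \<Rightarrow> 'a \<Rightarrow> 'a set" where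
  "ekeland_set h c y = {w. h w + c * dist w y \<le> h y}"

lemma ekeland_set_self [simp]: "y \<in> ekeland_set h c y"
  by (simp add: ekeland_set_def)

lemma ekeland_set_subset:
  assumes "c \<ge> 0" and "a \<in> ekeland_set h c b"
  shows "ekeland_set h c a \<subseteq> ekeland_set h c b"
proof
  fix w assume "w \<in> ekeland_set h c a"
  moreover have "c * dist w b \<le> c * dist w a + c * dist a b"
    using mult_left_mono[OF dist_triangle[of w b a] \<open>c \<ge> 0\<close>] by (simp add: distrib_left)
  ultimately show "w \<in> ekeland_set h c b"
    using assms(2) by (simp add: ekeland_set_def)
qed

lemma closed_ekeland_set:
  assumes "\<And>z t. t < h z \<Longrightarrow> \<forall>\<^sub>F w in nhds z. t < h w"
  shows "closed (ekeland_set h c y)"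
  unfolding ekeland_set_def
  by (rule closed_sublevel_of_lsc) (rule lsc_add_scaled_dist[OF assms])

lemma ekeland_set_radius:
  assumes bdd: "bdd_below (range h)" and c: "c \<ge> 0"
    and step: "x' \<in> ekeland_set h c x"
    and near_inf: "h x' < Inf (h ` ekeland_set h c x) + e"
    and w: "w \<in> ekeland_set h c x'"
  shows "c * dist w x' < e"
proof -
  have "w \<in> ekeland_set h c x"
    using ekeland_set_subset[OF c step] w by blast
  then have "Inf (h ` ekeland_set h c x) \<le> h w"
    using bdd by (auto intro!: cInf_lower bdd_below_mono[of "range h"])
  moreover have "h w + c * dist w x' \<le> h x'"
    using w by (simp add: ekeland_set_def)
  ultimately show ?thesis
    using near_inf by linarith
qed

lemma ekeland_sequence:
  fixes h :: "'a::metric_space \<Rightarrow> real"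
  obtains x where "x 0 = x0" and "\<And>n. x (Suc n) \<in> ekeland_set h c (x n)"
    and "\<And>n. h (x (Suc n)) < Inf (h ` ekeland_set h c (x n)) + 1 / real (Suc n)"
proof -
  define Q where "Q n y y' \<longleftrightarrow>
    y' \<in> ekeland_set h c y \<and> h y' < Inf (h ` ekeland_set h c y) + 1 / real (Suc n)" for n y y'
  have next_point: "\<exists>y'. Q n y y'" for n y
  proof -
    have "h ` ekeland_set h c y \<noteq> {}"
      by (metis ekeland_set_self empty_iff image_is_empty)
    moreover have "Inf (h ` ekeland_set h c y) < Inf (h ` ekeland_set h c y) + 1 / real (Suc n)"
      by simp
    ultimately obtain v where "v \<in> h ` ekeland_set h c y"
      and "v < Inf (h ` ekeland_set h c y) + 1 / real (Suc n)"
      by (rule cInf_lessD[THEN bexE])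
    then show ?thesis
      unfolding Q_def by auto
  qed
  have "\<exists>x. \<forall>n. (n = 0 \<longrightarrow> x n = x0) \<and> Q n (x n) (x (Suc n))"
    by (rule dependent_nat_choice) (simp_all add: next_point)
  then obtain x where "x 0 = x0" and "\<And>n. Q n (x n) (x (Suc n))"
    by blast
  then show thesis
    using that unfolding Q_def by blast
qed

theorem ekeland_variational_principle:
  fixes h :: "'a::complete_space \<Rightarrow> real"
  assumes lsc: "\<And>z t. t < h z \<Longrightarrow> \<forall>\<^sub>F w in nhds z. t < h w"
    and bdd: "bdd_below (range h)" and c: "c > 0"
  obtains z where "h z + c * dist z x0 \<le> h x0" and "\<And>w. h z \<le> h w + c * dist w z"
proof -
  obtain x where x0: "x 0 = x0" and step: "\<And>n. x (Suc n) \<in> ekeland_set h c (x n)"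
    and near_inf: "\<And>n. h (x (Suc n)) < Inf (h ` ekeland_set h c (x n)) + 1 / real (Suc n)"
    using ekeland_sequence by blast
  define T where "T n = ekeland_set h c (x n)" for n
  have antimono: "T n \<subseteq> T m" if "m \<le> n" for m n
    using lift_Suc_antimono_le[of T, OF _ that] ekeland_set_subset[OF _ step] c
    by (simp add: T_def)
  have shrinking: "\<exists>n. \<forall>u\<in>T n. \<forall>v\<in>T n. dist u v < \<epsilon>" if "\<epsilon> > 0" for \<epsilon>
  proof -
    obtain N where N: "inverse (real (Suc N)) < c * \<epsilon> / 2"
      using reals_Archimedean[of "c * \<epsilon> / 2"] c \<open>\<epsilon> > 0\<close> by auto
    have "c * dist u (x (Suc N)) < c * \<epsilon> / 2" if "u \<in> T (Suc N)" for u
    proof -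
      have "c * dist u (x (Suc N)) < 1 / real (Suc N)"
        using ekeland_set_radius[OF bdd _ step near_inf] that c by (simp add: T_def)
      with N show ?thesis
        by (simp add: inverse_eq_divide)
    qed
    then have "dist u (x (Suc N)) < \<epsilon> / 2" if "u \<in> T (Suc N)" for u
      using that c by (simp add: field_simps)
    then show ?thesis
      by (blast intro: dist_triangle_half_l)
  qed
  have "closed (T n)" for n
    using closed_ekeland_set[OF lsc] by (simp add: T_def)
  moreover have "T n \<noteq> {}" for n
    unfolding T_def by (metis ekeland_set_self empty_iff)
  ultimately obtain z where z: "\<Inter> (range T) = {z}"
    using decreasing_closed_nest_sing[of T] antimono shrinking by blast
  show thesis
  proof
    show "h z + c * dist z x0 \<le> h x0"
      using z x0 by (force simp: T_def ekeland_set_def)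
  next
    fix w
    show "h z \<le> h w + c * dist w z"
    proof (rule ccontr)
      assume "\<not> ?thesis"
      then have "w \<in> ekeland_set h c z" and "w \<noteq> z"
        by (auto simp: ekeland_set_def)
      moreover have "ekeland_set h c z \<subseteq> T n" for n
        using z c unfolding T_def by (intro ekeland_set_subset) auto
      ultimately have "w \<in> \<Inter> (range T)"
        by blast
      with z \<open>w \<noteq> z\<close> show False
        by blast
    qed
  qed
qed

lemma set_dist_eq_infdist: "S \<noteq> {} \<Longrightarrow> set_dist x S = ereal (infdist x S)"
  by (simp add: set_dist_def infdist_notempty)

lemma set_dist_nonneg: "0 \<le> set_dist x S"
proof (cases "S = {}")
  case False
  then show ?thesis
    by (simp add: set_dist_eq_infdist[OF False] infdist_nonneg)
qed (simp add: set_dist_def)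

lemma set_dist_le_dist: "y \<in> S \<Longrightarrow> set_dist x S \<le> ereal (dist x y)"
  by (subst set_dist_eq_infdist) (auto simp: infdist_le)

lemma set_dist_eq_0: "x \<in> S \<Longrightarrow> set_dist x S = 0"
  by (subst set_dist_eq_infdist) (auto simp: zero_ereal_def)

lemma set_dist_triangle: "set_dist x S \<le> ereal (dist x x') + set_dist x' S"
proof (cases "S = {}")
  case False
  then show ?thesis
    using infdist_triangle[of x S x'] by (simp add: set_dist_eq_infdist[OF False] add.commute)
qed (simp add: set_dist_def)

lemma set_dist_lessE:
  assumes "set_dist x S < ereal a"
  obtains y where "y \<in> S" and "dist x y < a"
proof -
  have "S \<noteq> {}"
    using assms by (auto simp: set_dist_def)
  moreover from this have "Inf (dist x ` S) < a"
    using assms by (simp add: set_dist_def)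
  ultimately show thesis
    using that cInf_lessD[of "dist x ` S" a] by auto
qed

lemma set_dist_epigraph_fibre:
  assumes "f x = ereal b" and "y \<le> b"
  shows "set_dist y {t. f x \<le> ereal t} = ereal (b - y)"
proof -
  have "{t. f x \<le> ereal t} = {b..}"
    using assms(1) by auto
  moreover have "infdist y {b..} = b - y"
  proof (rule antisym)
    show "infdist y {b..} \<le> b - y"
      using infdist_le[of b "{b..}" y] assms(2) by (simp add: dist_real_def)
    show "b - y \<le> infdist y {b..}"
      by (auto simp: infdist_notempty dist_real_def intro!: cINF_greatest)
  qed
  ultimately show ?thesis
    by (simp add: set_dist_eq_infdist)
qed

lemma lsc_fun_eventually_nhds:
  assumes "lsc_fun f" and "t < f z"
  shows "\<forall>\<^sub>F w in nhds z. t < f w"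
proof -
  have "\<forall>\<^sub>F w in at z. t < f w"
    using assms le_Liminf_iff unfolding lsc_fun_def by blast
  then show ?thesis
    using assms(2) unfolding eventually_at_filter by (auto elim: eventually_mono)
qed

lemma strong_slope_le:
  assumes "f z = ereal b" and "c \<ge> 0"
    and calm: "\<forall>\<^sub>F w in at z. f z \<le> f w + ereal (c * dist w z)"
  shows "strong_slope f z \<le> ereal c"
  unfolding strong_slope_def
proof (rule Limsup_bounded)
  have quotient_le: "max 0 (f z - f w) / ereal (dist z w) \<le> ereal c"
    if "w \<noteq> z" and "f z \<le> f w + ereal (c * dist w z)" for w
  proof -
    have "f z - f w \<le> ereal (c * dist z w)"
      using that(2) assms(1) by (cases "f w") (auto simp: dist_commute)
    then have "max 0 (f z - f w) \<le> ereal (dist z w) * ereal c"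
      using \<open>c \<ge> 0\<close> by (simp add: mult.commute)
    then show ?thesis
      using \<open>w \<noteq> z\<close> by (intro ereal_divide_le_posI) auto
  qed
  show "\<forall>\<^sub>F w in at z. max 0 (f z - f w) / ereal (dist z w) \<le> ereal c"
    using calm unfolding eventually_at_filter
    by (rule eventually_mono) (simp add: quotient_le)
qed

lemma strong_slope_lessE:
  assumes "strong_slope f x < ereal q"
  obtains d where "d > 0"
    and "\<And>w. w \<noteq> x \<Longrightarrow> dist w x < d \<Longrightarrow> max 0 (f x - f w) / ereal (dist x w) < ereal q"
proof -
  have "\<forall>\<^sub>F w in at x. max 0 (f x - f w) / ereal (dist x w) < ereal q"
    using assms Limsup_le_iff[where F = "at x" and X = "\<lambda>w. max 0 (f x - f w) / ereal (dist x w)"]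
    unfolding strong_slope_def by blast
  then show thesis
    using that by (auto simp: eventually_at)
qed

lemma slope_quotient_ge:
  assumes "f x = ereal a" and "f w \<le> ereal (a - t)" and "w \<noteq> x"
  shows "ereal (t / dist x w) \<le> max 0 (f x - f w) / ereal (dist x w)"
proof -
  have "ereal t \<le> max 0 (f x - f w)"
    using ereal_minus_mono[OF order.refl assms(2), of "f x"] assms(1) by (simp add: max.coboundedI2)
  then show ?thesis
    using \<open>w \<noteq> x\<close> ereal_divide_right_mono[of "ereal t" _ "ereal (dist x w)"] by simp
qed

lemma strong_slope_ge:
  assumes fx: "f x = ereal a" and "k > 0" and "\<delta> > 0"
    and descent: "\<And>t. 0 < t \<Longrightarrow> t < \<delta> \<Longrightarrow> set_dist x {w. f w \<le> ereal (a - t)} \<le> ereal (k * t)"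
  shows "ereal (1 / k) \<le> strong_slope f x"
proof (rule ccontr)
  assume "\<not> ?thesis"
  moreover have "0 < ereal (1 / k)"
    using \<open>k > 0\<close> by simp
  ultimately have "max (strong_slope f x) 0 < ereal (1 / k)"
    by (simp add: not_le)
  from ereal_dense2[OF this] obtain q
    where "max (strong_slope f x) 0 < ereal q" and "q < 1 / k"
    by auto
  then have "q > 0" and "strong_slope f x < ereal q" and "k * q < 1"
    using \<open>k > 0\<close> by (auto simp: field_simps)
  obtain d where "d > 0" and steep: "\<And>w. w \<noteq> x \<Longrightarrow> dist w x < d \<Longrightarrow>
      max 0 (f x - f w) / ereal (dist x w) < ereal q"
    using \<open>strong_slope f x < ereal q\<close> by (rule strong_slope_lessE) blast
  define t where "t = min \<delta> (q * d) / 2"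
  have t: "0 < t" "t < \<delta>"
    using \<open>d > 0\<close> \<open>\<delta> > 0\<close> \<open>q > 0\<close> by (auto simp: t_def)
  have "t \<le> q * d / 2"
    by (simp add: t_def)
  then have "t / q < d"
    using \<open>q > 0\<close> \<open>t > 0\<close> by (simp add: field_simps)
  have "k * t < t / q"
    using \<open>k * q < 1\<close> \<open>q > 0\<close> \<open>t > 0\<close> by (simp add: field_simps)
  then have "set_dist x {w. f w \<le> ereal (a - t)} < ereal (t / q)"
    using descent[OF t] by (simp add: order_le_less_trans)
  then obtain w where fw: "f w \<le> ereal (a - t)" and w: "dist x w < t / q"
    by (rule set_dist_lessE) auto
  have "w \<noteq> x"
    using fw fx \<open>t > 0\<close> by auto
  have "ereal q < ereal (t / dist x w)"
    using w \<open>q > 0\<close> \<open>w \<noteq> x\<close> by (simp add: field_simps)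
  also have "\<dots> \<le> max 0 (f x - f w) / ereal (dist x w)"
    by (rule slope_quotient_ge[OF fx fw \<open>w \<noteq> x\<close>])
  finally show False
    using steep[OF \<open>w \<noteq> x\<close>] w \<open>t / q < d\<close> by (simp add: dist_commute)
qed

definition ereal_clamp :: "real \<Rightarrow> real \<Rightarrow> ereal \<Rightarrow> real" where
  "ereal_clamp r a v = real_of_ereal (max (ereal r) (min v (ereal a)))"

lemma ereal_ereal_clamp: "r \<le> a \<Longrightarrow> ereal (ereal_clamp r a v) = max (ereal r) (min v (ereal a))"
  by (cases v) (auto simp: ereal_clamp_def max_def min_def)

lemma ereal_clamp_ge: "r \<le> a \<Longrightarrow> r \<le> ereal_clamp r a v"
  using ereal_ereal_clamp[of r a v] by (metis ereal_less_eq(3) max.cobounded1)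

lemma eventually_less_ereal_clamp:
  assumes lsc: "lsc_fun f" and "r \<le> a" and "t < ereal_clamp r a (f z)"
  shows "\<forall>\<^sub>F w in nhds z. t < ereal_clamp r a (f w)"
proof -
  have "ereal t < max (ereal r) (min (f z) (ereal a))"
    using assms(3) ereal_ereal_clamp[OF \<open>r \<le> a\<close>] by (metis less_ereal.simps(1))
  then consider "t < r" | "ereal t < f z" and "t < a"
    by (auto simp: less_max_iff_disj)
  then show ?thesis
  proof cases
    case 1
    then show ?thesis
      using ereal_clamp_ge[OF \<open>r \<le> a\<close>] by (simp add: less_le_trans always_eventually)
  next
    case 2
    have "t < ereal_clamp r a (f w)" if "ereal t < f w" for w
      using that 2 ereal_ereal_clamp[OF \<open>r \<le> a\<close>, of "f w"]
      by (metis less_ereal.simps(1) less_max_iff_disj min_less_iff_conj)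
    then show ?thesis
      using lsc_fun_eventually_nhds[OF lsc 2(1)] by (auto elim: eventually_mono)
  qed
qed

lemma ekeland_truncated:
  fixes f :: "'a::complete_space \<Rightarrow> ereal"
  assumes lsc: "lsc_fun f" and fx: "f x = ereal a" and "r < a" and "c > 0"
  obtains z where "c * dist z x \<le> a - r"
    and "ereal r < f z \<Longrightarrow> f z \<le> f x"
    and "\<And>w. ereal r < f z \<Longrightarrow> ereal r < f w \<Longrightarrow> f z \<le> f w + ereal (c * dist w z)"
proof -
  define h where "h w = ereal_clamp r a (f w)" for w
  have h: "ereal (h w) = max (ereal r) (min (f w) (ereal a))" for w
    using ereal_ereal_clamp \<open>r < a\<close> by (simp add: h_def)
  have h_ge: "r \<le> h w" for w
    using ereal_clamp_ge \<open>r < a\<close> by (simp add: h_def)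
  have lsc_h: "\<forall>\<^sub>F w in nhds z. t < h w" if "t < h z" for z t
    using eventually_less_ereal_clamp[OF lsc _ that[unfolded h_def]] \<open>r < a\<close> by (simp add: h_def)
  have "bdd_below (range h)"
    using h_ge by (auto intro: bdd_belowI[of _ r])
  then obtain z where z_x: "h z + c * dist z x \<le> h x" and z_min: "\<And>w. h z \<le> h w + c * dist w z"
    using ekeland_variational_principle[OF lsc_h _ \<open>c > 0\<close>] by blast
  have h_x: "h x = a"
    using h[of x] fx \<open>r < a\<close> by simp
  show thesis
  proof (rule that)
    show "c * dist z x \<le> a - r"
      using z_x h_x h_ge[of z] by linarith
  next
    assume "ereal r < f z"
    have "f z \<le> ereal a"
    proof (rule ccontr)
      assume "\<not> f z \<le> ereal a"
      then have "h z = a"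
        using h[of z] \<open>r < a\<close> by simp
      then have "z = x"
        using z_x h_x \<open>c > 0\<close> by (simp add: mult_le_0_iff)
      with \<open>\<not> f z \<le> ereal a\<close> fx show False
        by simp
    qed
    then have f_z: "f z = ereal (h z)"
      using h[of z] \<open>ereal r < f z\<close> by simp
    moreover have "0 \<le> c * dist z x"
      using \<open>c > 0\<close> by simp
    ultimately show "f z \<le> f x"
      using z_x h_x fx by simp
    fix w
    assume "ereal r < f w"
    then have "ereal (h w) \<le> f w"
      using h[of w] by simp
    have "f z \<le> ereal (h w) + ereal (c * dist w z)"
      using z_min[of w] f_z by simp
    also have "\<dots> \<le> f w + ereal (c * dist w z)"
      using \<open>ereal (h w) \<le> f w\<close> by (rule add_right_mono)
    finally show "f z \<le> f w + ereal (c * dist w z)" .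
  qed
qed

lemma ekeland_small_slope_point:
  fixes f :: "'a::complete_space \<Rightarrow> ereal"
  assumes lsc: "lsc_fun f" and fx: "f x = ereal a" and "r < a" and "c > 0"
    and far: "ereal ((a - r) / c) < set_dist x {y. f y \<le> ereal r}"
  obtains z where "ereal r < f z" and "f z \<le> f x" and "strong_slope f z \<le> ereal c"
proof -
  obtain z where "c * dist z x \<le> a - r" and below: "ereal r < f z \<Longrightarrow> f z \<le> f x"
    and calm: "\<And>w. ereal r < f z \<Longrightarrow> ereal r < f w \<Longrightarrow> f z \<le> f w + ereal (c * dist w z)"
    by (rule ekeland_truncated[OF lsc fx \<open>r < a\<close> \<open>c > 0\<close>]) blast
  then have "dist z x \<le> (a - r) / c"
    using \<open>c > 0\<close> by (simp add: field_simps mult.commute)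
  have "ereal r < f z"
  proof (rule ccontr)
    assume "\<not> ereal r < f z"
    then have "set_dist x {y. f y \<le> ereal r} \<le> ereal (dist x z)"
      by (intro set_dist_le_dist) (simp add: not_less)
    also have "\<dots> \<le> ereal ((a - r) / c)"
      using \<open>dist z x \<le> (a - r) / c\<close> by (simp add: dist_commute)
    finally show False
      using far by simp
  qed
  moreover from this have "f z \<le> f x"
    by (rule below)
  moreover obtain b where "f z = ereal b"
    using calculation fx by (cases "f z") auto
  have "\<forall>\<^sub>F w in at z. f z \<le> f w + ereal (c * dist w z)"
    using lsc_fun_eventually_nhds[OF lsc \<open>ereal r < f z\<close>] unfolding eventually_at_filter
    by (rule eventually_mono) (simp add: calm \<open>ereal r < f z\<close>)
  then have "strong_slope f z \<le> ereal c"
    using strong_slope_le[of f z b c] \<open>f z = ereal b\<close> \<open>c > 0\<close> by simp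
  ultimately show thesis
    using that by blast
qed

abbreviation level_band :: "('a \<Rightarrow> ereal) \<Rightarrow> real \<Rightarrow> 'a set" where
  "level_band f r0 \<equiv> {x. 0 < f x \<and> f x < ereal r0}"

definition sublevel_error_bound :: "('a::metric_space \<Rightarrow> ereal) \<Rightarrow> real \<Rightarrow> real \<Rightarrow> bool" where
  "sublevel_error_bound f r0 k \<longleftrightarrow>
     (\<forall>r\<in>{0<..<r0}. \<forall>x\<in>level_band f r0.
        set_dist x {y. f y \<le> ereal r} \<le> ereal k * max 0 (f x - ereal r))"

definition strong_slope_bound :: "('a::metric_space \<Rightarrow> ereal) \<Rightarrow> real \<Rightarrow> real \<Rightarrow> bool" where
  "strong_slope_bound f r0 k \<longleftrightarrow> (\<forall>x\<in>level_band f r0. ereal (1 / k) \<le> strong_slope f x)"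

lemma strong_slope_bound_if_metrically_regular:
  assumes "k > 0"
    and regular: "metrically_regular_on k (\<lambda>x. {y::real. f x \<le> ereal y}) (level_band f r0 \<times> {0<..<r0})"
  shows "strong_slope_bound f r0 k"
  unfolding strong_slope_bound_def
proof
  fix x assume "x \<in> level_band f r0"
  then obtain a where a: "f x = ereal a" "0 < a" "a < r0"
    by (cases "f x") auto
  then have "metrically_regular_at k (\<lambda>x. {y::real. f x \<le> ereal y}) x a"
    using regular unfolding metrically_regular_on_def graph_mv_def by auto
  then obtain \<epsilon> \<delta> where "\<epsilon> > 0" "\<delta> > 0" and regular_at: "\<forall>x'\<in>ball x \<epsilon>. \<forall>y\<in>ball a \<delta>.
      set_dist x' {w. f w \<le> ereal y} \<le> ereal k * set_dist y {t. f x' \<le> ereal t}"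
    unfolding metrically_regular_at_def inv_mv_def by auto
  show "ereal (1 / k) \<le> strong_slope f x"
  proof (rule strong_slope_ge[of f x a k \<delta>, OF a(1) \<open>k > 0\<close> \<open>\<delta> > 0\<close>])
    fix t assume "0 < t" "t < \<delta>"
    then have "set_dist x {w. f w \<le> ereal (a - t)} \<le> ereal k * set_dist (a - t) {s. f x \<le> ereal s}"
      using regular_at \<open>\<epsilon> > 0\<close> by (simp add: dist_real_def)
    also have "\<dots> = ereal (k * t)"
      using set_dist_epigraph_fibre[of f x a "a - t", OF a(1)] \<open>0 < t\<close> by simp
    finally show "set_dist x {w. f w \<le> ereal (a - t)} \<le> ereal (k * t)" .
  qed
qed

lemma sublevel_error_bound_if_strong_slope_bound:
  fixes f :: "'a::complete_space \<Rightarrow> ereal"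
  assumes lsc: "lsc_fun f" and "k > 0" and slope: "strong_slope_bound f r0 k"
  shows "sublevel_error_bound f r0 k"
  unfolding sublevel_error_bound_def
proof (intro ballI)
  fix r x assume r: "r \<in> {0<..<r0}" and "x \<in> level_band f r0"
  then obtain a where a: "f x = ereal a" "a < r0"
    by (cases "f x") auto
  show "set_dist x {y. f y \<le> ereal r} \<le> ereal k * max 0 (f x - ereal r)"
  proof (cases "a \<le> r")
    case True
    then show ?thesis
      using a \<open>k > 0\<close> by (simp add: set_dist_eq_0)
  next
    case False
    show ?thesis
    proof (rule ccontr)
      assume "\<not> ?thesis"
      then have "ereal (k * (a - r)) < set_dist x {y. f y \<le> ereal r}"
        using a False by simp
      from ereal_dense2[OF this] obtain \<rho>
        where "k * (a - r) < \<rho>" and far: "ereal \<rho> < set_dist x {y. f y \<le> ereal r}"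
        by auto
      moreover have "0 < k * (a - r)"
        using \<open>k > 0\<close> False by simp
      ultimately have "\<rho> > 0"
        by linarith
      define c where "c = (a - r) / \<rho>"
      have "c > 0" and "(a - r) / c = \<rho>"
        using \<open>\<rho> > 0\<close> False by (auto simp: c_def)
      have "c < 1 / k"
        using \<open>k * (a - r) < \<rho>\<close> \<open>\<rho> > 0\<close> \<open>k > 0\<close> by (simp add: c_def field_simps)
      from False have "r < a"
        by simp
      from far have "ereal ((a - r) / c) < set_dist x {y. f y \<le> ereal r}"
        unfolding \<open>(a - r) / c = \<rho>\<close> .
      then obtain z where "ereal r < f z" and "f z \<le> f x" and "strong_slope f z \<le> ereal c"
        by (rule ekeland_small_slope_point[OF lsc a(1) \<open>r < a\<close> \<open>c > 0\<close>])
      have "0 < f z"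
        using \<open>ereal r < f z\<close> r by (simp add: order_less_trans[of 0 "ereal r"])
      moreover have "f z < ereal r0"
        using \<open>f z \<le> f x\<close> a by (simp add: order_le_less_trans)
      ultimately have "ereal (1 / k) \<le> strong_slope f z"
        using slope unfolding strong_slope_bound_def by blast
      from order_trans[OF this \<open>strong_slope f z \<le> ereal c\<close>] \<open>c < 1 / k\<close> show False
        by simp
    qed
  qed
qed

lemma set_dist_sublevel_via_base:
  assumes bound: "sublevel_error_bound f r0 k" and "xb \<in> level_band f r0" and "f xb = ereal a"
    and "0 < y" and "y < r0"
  shows "set_dist x {x. f x \<le> ereal y} \<le> ereal (dist x xb + k * max 0 (a - y))"
proof -
  have "set_dist xb {x. f x \<le> ereal y} \<le> ereal k * max 0 (f xb - ereal y)"
    using bound \<open>xb \<in> level_band f r0\<close> \<open>0 < y\<close> \<open>y < r0\<close>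
    unfolding sublevel_error_bound_def by auto
  also have "\<dots> = ereal (k * max 0 (a - y))"
    using \<open>f xb = ereal a\<close> by (cases "a \<le> y") (simp_all add: max_def)
  finally have base: "set_dist xb {x. f x \<le> ereal y} \<le> ereal (k * max 0 (a - y))" .
  have "set_dist x {x. f x \<le> ereal y} \<le> ereal (dist x xb) + set_dist xb {x. f x \<le> ereal y}"
    by (rule set_dist_triangle)
  also have "\<dots> \<le> ereal (dist x xb) + ereal (k * max 0 (a - y))"
    using base by (rule add_left_mono)
  finally show ?thesis
    by simp
qed

lemma set_dist_sublevel_le_near_base:
  fixes f :: "'a::metric_space \<Rightarrow> ereal"
  assumes "k > 0" and bound: "sublevel_error_bound f r0 k" and "f x = ereal b" and "y < b"
    and "f xb \<le> ereal yb" and "xb \<in> level_band f r0"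
    and "0 < y" and "y < r0" and "r0 - yb < 2 * (r0 - y)"
    and near: "2 * dist x xb < k * (r0 - yb)"
  shows "set_dist x {x. f x \<le> ereal y} \<le> ereal (k * (b - y))"
proof (cases "b < r0")
  case True
  then have "x \<in> level_band f r0"
    using \<open>f x = ereal b\<close> \<open>y < b\<close> \<open>0 < y\<close> by simp
  then have "set_dist x {x. f x \<le> ereal y} \<le> ereal k * max 0 (f x - ereal y)"
    using bound \<open>0 < y\<close> \<open>y < r0\<close> unfolding sublevel_error_bound_def by auto
  then show ?thesis
    using \<open>f x = ereal b\<close> \<open>y < b\<close> by simp
next
  case False
  \<comment> \<open>x lies above the band, so the error bound is applied at the base point xb instead\<close>
  obtain a where a: "f xb = ereal a" and "a \<le> yb"
    using \<open>f xb \<le> ereal yb\<close> \<open>xb \<in> level_band f r0\<close> by (cases "f xb") auto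
  have "k * r0 \<le> k * b" and "k * a \<le> k * yb"
    using \<open>k > 0\<close> False \<open>a \<le> yb\<close> by simp_all
  moreover have "k * r0 - k * yb < 2 * (k * r0) - 2 * (k * y)"
    using mult_strict_left_mono[OF \<open>r0 - yb < 2 * (r0 - y)\<close> \<open>k > 0\<close>] by (simp add: algebra_simps)
  moreover have "2 * dist x xb < k * r0 - k * yb"
    using near by (simp add: algebra_simps)
  moreover have "k * max 0 (a - y) = (if a \<le> y then 0 else k * a - k * y)"
    by (simp add: right_diff_distrib)
  ultimately have "dist x xb + k * max 0 (a - y) \<le> k * (b - y)"
    using zero_le_dist[of x xb] right_diff_distrib[of k b y] by argo
  then show ?thesis
    using set_dist_sublevel_via_base[OF bound \<open>xb \<in> level_band f r0\<close> a \<open>0 < y\<close> \<open>y < r0\<close>, of x]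
    by (simp add: order_trans)
qed

lemma epigraph_regularity_estimate:
  fixes f :: "'a::metric_space \<Rightarrow> ereal"
  assumes "f x \<noteq> -\<infinity>" and "k > 0" and bound: "sublevel_error_bound f r0 k"
    and base: "f xb \<le> ereal yb" "xb \<in> level_band f r0"
    and y: "0 < y" "y < r0" "r0 - yb < 2 * (r0 - y)"
    and near: "2 * dist x xb < k * (r0 - yb)"
  shows "set_dist x {x. f x \<le> ereal y} \<le> ereal k * set_dist y {t. f x \<le> ereal t}"
proof (cases "f x")
  case PInf
  then show ?thesis
    using \<open>k > 0\<close> by (simp add: set_dist_def)
next
  case MInf
  with \<open>f x \<noteq> -\<infinity>\<close> show ?thesis
    by simp
next
  case (real b)
  show ?thesis
  proof (cases "b \<le> y")
    case True
    then have "set_dist x {x. f x \<le> ereal y} = 0"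
      using real by (intro set_dist_eq_0) simp
    moreover have "0 \<le> ereal k * set_dist y {t. f x \<le> ereal t}"
      using \<open>k > 0\<close> set_dist_nonneg by (simp add: ereal_zero_le_0_iff)
    ultimately show ?thesis
      by simp
  next
    case False
    then show ?thesis
      using set_dist_sublevel_le_near_base[OF \<open>k > 0\<close> bound real _ base y near]
        set_dist_epigraph_fibre[of f x b y] real by simp
  qed
qed

lemma epigraph_metrically_regular_if_sublevel_error_bound:
  fixes f :: "'a::metric_space \<Rightarrow> ereal"
  assumes "\<And>x. f x \<noteq> -\<infinity>" and "k > 0" and bound: "sublevel_error_bound f r0 k"
  shows "metrically_regular_on k (\<lambda>x. {y::real. f x \<le> ereal y}) (level_band f r0 \<times> {0<..<r0})"
proof -
  have "metrically_regular_at k (\<lambda>x. {y::real. f x \<le> ereal y}) xb yb"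
    if "f xb \<le> ereal yb" and "0 < f xb" and "f xb < ereal r0" and "0 < yb" and "yb < r0" for xb yb
  proof -
    define \<epsilon> where "\<epsilon> = k * (r0 - yb) / 2"
    define \<delta> where "\<delta> = min yb (r0 - yb) / 2"
    have "\<epsilon> > 0" and "\<delta> > 0"
      using \<open>k > 0\<close> \<open>0 < yb\<close> \<open>yb < r0\<close> by (auto simp: \<epsilon>_def \<delta>_def)
    moreover have "set_dist x (inv_mv (\<lambda>x. {y::real. f x \<le> ereal y}) y)
        \<le> ereal k * set_dist y {t. f x \<le> ereal t}"
      if "x \<in> ball xb \<epsilon>" and "y \<in> ball yb \<delta>" for x y
      unfolding inv_mv_def mem_Collect_eq
    proof (rule epigraph_regularity_estimate[of f, OF assms(1) \<open>k > 0\<close> bound \<open>f xb \<le> ereal yb\<close>])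
      show "xb \<in> level_band f r0"
        using \<open>0 < f xb\<close> \<open>f xb < ereal r0\<close> by simp
      have "\<bar>yb - y\<bar> < \<delta>" and "2 * \<delta> \<le> yb" and "2 * \<delta> \<le> r0 - yb"
        using that(2) by (simp_all add: \<delta>_def dist_real_def)
      then show "0 < y" and "y < r0" and "r0 - yb < 2 * (r0 - y)"
        by (simp_all add: abs_less_iff)
      show "2 * dist x xb < k * (r0 - yb)"
        using that(1) by (simp add: \<epsilon>_def dist_commute)
    qed
    ultimately show ?thesis
      unfolding metrically_regular_at_def by blast
  qed
  then show ?thesis
    unfolding metrically_regular_on_def graph_mv_def by auto
qed

theorem theorem2p2:
  fixes f :: "'a::complete_space \<Rightarrow> ereal" and r0 k :: real
  assumes "proper_fun f" and "lsc_fun f" and "r0 > 0" and "k > 0"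
  shows "(metrically_regular_on k (\<lambda>x. {y::real. f x \<le> ereal y})
            ({x. 0 < f x \<and> f x < ereal r0} \<times> {0<..<r0}) \<longleftrightarrow>
          (\<forall>r\<in>{0<..<r0}. \<forall>x\<in>{x. 0 < f x \<and> f x < ereal r0}.
             set_dist x {y. f y \<le> ereal r} \<le> ereal k * max 0 (f x - ereal r))) \<and>
         ((\<forall>r\<in>{0<..<r0}. \<forall>x\<in>{x. 0 < f x \<and> f x < ereal r0}.
             set_dist x {y. f y \<le> ereal r} \<le> ereal k * max 0 (f x - ereal r)) \<longleftrightarrow>
          (\<forall>x\<in>{x. 0 < f x \<and> f x < ereal r0}. strong_slope f x \<ge> ereal (1 / k)))"
proof -
  have "\<And>x. f x \<noteq> -\<infinity>"
    using \<open>proper_fun f\<close> by (simp add: proper_fun_def)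
  note ii_i = epigraph_metrically_regular_if_sublevel_error_bound[of f, OF this \<open>k > 0\<close>, of r0]
  note i_iii = strong_slope_bound_if_metrically_regular[of k f r0, OF \<open>k > 0\<close>]
  note iii_ii = sublevel_error_bound_if_strong_slope_bound[of f k r0, OF \<open>lsc_fun f\<close> \<open>k > 0\<close>]
  show ?thesis
    using ii_i i_iii iii_ii unfolding sublevel_error_bound_def strong_slope_bound_def by blast
qed

end
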